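(* Let $F\colon\mathcal{A}\to\mathcal{B}$ be an exceptionally Frobenius functor. Then the canonical map $$\varphi\colon R\xrightarrow{R\eta_L}RFL\xrightarrow{\eta_R^{-1}L}L$$ is an isomorphism.
   Context: All categories are $k$-linear triangulated, all functors exact. $F$ has left adjoint $L$ and right adjoint $R$, with units $\eta_R\colon\mathrm{id}_{\mathcal{A}}\to RF$ and $\eta_L\colon\mathrm{id}_{\mathcal{B}}\to FL$. $F$ is exceptional if it is fully faithful and has both adjoints; in that case $\eta_R$ is an isomorphism. $F$ is exceptionally Frobenius if it is exceptional and there exists some isomorphism $R\cong L$. *)

theory Defs
  imports Main
begin

text \<open>Composition is written ccomp C g f for "g after f".\<close>

record ('o, 'm, 'k) kcat =
  cobj   :: "'o set"
  carr   :: "'m set"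
  cdom   :: "'m \<Rightarrow> 'o"
  ccod   :: "'m \<Rightarrow> 'o"
  cid    :: "'o \<Rightarrow> 'm"
  ccomp  :: "'m \<Rightarrow> 'm \<Rightarrow> 'm"
  cadd   :: "'m \<Rightarrow> 'm \<Rightarrow> 'm"
  czero  :: "'o \<Rightarrow> 'o \<Rightarrow> 'm"
  cneg   :: "'m \<Rightarrow> 'm"
  csmult :: "'k \<Rightarrow> 'm \<Rightarrow> 'm"
  cshift :: "'o \<Rightarrow> 'o"
  cshiftm :: "'m \<Rightarrow> 'm"
  cdist  :: "('o \<times> 'o \<times> 'o \<times> 'm \<times> 'm \<times> 'm) set"

definition hom :: "('o, 'm, 'k) kcat \<Rightarrow> 'o \<Rightarrow> 'o \<Rightarrow> 'm set" where
  "hom C X Y = {f. f \<in> carr C \<and> cdom C f = X \<and> ccod C f = Y}"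

definition category :: "('o, 'm, 'k) kcat \<Rightarrow> bool" where
  "category C \<longleftrightarrow>
     (\<forall>f\<in>carr C. cdom C f \<in> cobj C \<and> ccod C f \<in> cobj C) \<and>
     (\<forall>X\<in>cobj C. cid C X \<in> hom C X X) \<and>
     (\<forall>X Y Z f g. f \<in> hom C X Y \<longrightarrow> g \<in> hom C Y Z \<longrightarrow> ccomp C g f \<in> hom C X Z) \<and>
     (\<forall>W X Y Z f g h. f \<in> hom C W X \<longrightarrow> g \<in> hom C X Y \<longrightarrow> h \<in> hom C Y Z \<longrightarrow>
        ccomp C h (ccomp C g f) = ccomp C (ccomp C h g) f) \<and>
     (\<forall>X Y f. f \<in> hom C X Y \<longrightarrow> ccomp C (cid C Y) f = f \<and> ccomp C f (cid C X) = f)"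

definition iso :: "('o, 'm, 'k) kcat \<Rightarrow> 'm \<Rightarrow> bool" where
  "iso C f \<longleftrightarrow> f \<in> carr C \<and>
     (\<exists>g\<in>hom C (ccod C f) (cdom C f).
        ccomp C g f = cid C (cdom C f) \<and> ccomp C f g = cid C (ccod C f))"

definition inv_arr :: "('o, 'm, 'k) kcat \<Rightarrow> 'm \<Rightarrow> 'm" where
  "inv_arr C f = (THE g. g \<in> hom C (ccod C f) (cdom C f) \<and>
       ccomp C g f = cid C (cdom C f) \<and> ccomp C f g = cid C (ccod C f))"

definition klinear :: "('o, 'm, 'k::field) kcat \<Rightarrow> bool" where
  "klinear C \<longleftrightarrow> category C \<and>
     (\<forall>X\<in>cobj C. \<forall>Y\<in>cobj C.
        czero C X Y \<in> hom C X Y \<and>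
        (\<forall>f\<in>hom C X Y. \<forall>g\<in>hom C X Y. cadd C f g \<in> hom C X Y) \<and>
        (\<forall>f\<in>hom C X Y. cneg C f \<in> hom C X Y) \<and>
        (\<forall>a f. f \<in> hom C X Y \<longrightarrow> csmult C a f \<in> hom C X Y) \<and>
        (\<forall>f\<in>hom C X Y. \<forall>g\<in>hom C X Y. \<forall>h\<in>hom C X Y.
           cadd C (cadd C f g) h = cadd C f (cadd C g h)) \<and>
        (\<forall>f\<in>hom C X Y. \<forall>g\<in>hom C X Y. cadd C f g = cadd C g f) \<and>
        (\<forall>f\<in>hom C X Y. cadd C (czero C X Y) f = f) \<and>
        (\<forall>f\<in>hom C X Y. cadd C (cneg C f) f = czero C X Y) \<and>
        (\<forall>a. \<forall>f\<in>hom C X Y. \<forall>g\<in>hom C X Y.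
           csmult C a (cadd C f g) = cadd C (csmult C a f) (csmult C a g)) \<and>
        (\<forall>a b. \<forall>f\<in>hom C X Y. csmult C (a + b) f = cadd C (csmult C a f) (csmult C b f)) \<and>
        (\<forall>a b. \<forall>f\<in>hom C X Y. csmult C (a * b) f = csmult C a (csmult C b f)) \<and>
        (\<forall>f\<in>hom C X Y. csmult C 1 f = f)) \<and>
     (\<forall>X Y Z f f' g. f \<in> hom C X Y \<longrightarrow> f' \<in> hom C X Y \<longrightarrow> g \<in> hom C Y Z \<longrightarrow>
        ccomp C g (cadd C f f') = cadd C (ccomp C g f) (ccomp C g f')) \<and>
     (\<forall>X Y Z f g g'. f \<in> hom C X Y \<longrightarrow> g \<in> hom C Y Z \<longrightarrow> g' \<in> hom C Y Z \<longrightarrow>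
        ccomp C (cadd C g g') f = cadd C (ccomp C g f) (ccomp C g' f)) \<and>
     (\<forall>X Y Z f g a. f \<in> hom C X Y \<longrightarrow> g \<in> hom C Y Z \<longrightarrow>
        ccomp C (csmult C a g) f = csmult C a (ccomp C g f) \<and>
        ccomp C g (csmult C a f) = csmult C a (ccomp C g f))"

definition zero_object :: "('o, 'm, 'k) kcat \<Rightarrow> 'o \<Rightarrow> bool" where
  "zero_object C Z \<longleftrightarrow> Z \<in> cobj C \<and> cid C Z = czero C Z Z"

definition kadditive :: "('o, 'm, 'k::field) kcat \<Rightarrow> bool" where
  "kadditive C \<longleftrightarrow> klinear C \<and> (\<exists>Z. zero_object C Z) \<and>
     (\<forall>X\<in>cobj C. \<forall>Y\<in>cobj C. \<exists>S i1 i2 p1 p2.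
        S \<in> cobj C \<and> i1 \<in> hom C X S \<and> i2 \<in> hom C Y S \<and> p1 \<in> hom C S X \<and> p2 \<in> hom C S Y \<and>
        ccomp C p1 i1 = cid C X \<and> ccomp C p2 i2 = cid C Y \<and>
        ccomp C p1 i2 = czero C Y X \<and> ccomp C p2 i1 = czero C X Y \<and>
        cadd C (ccomp C i1 p1) (ccomp C i2 p2) = cid C S)"

definition shift_automorphism :: "('o, 'm, 'k::field) kcat \<Rightarrow> bool" where
  "shift_automorphism C \<longleftrightarrow>
     bij_betw (cshift C) (cobj C) (cobj C) \<and>
     (\<forall>X\<in>cobj C. \<forall>Y\<in>cobj C.
        bij_betw (cshiftm C) (hom C X Y) (hom C (cshift C X) (cshift C Y))) \<and>
     (\<forall>X\<in>cobj C. cshiftm C (cid C X) = cid C (cshift C X)) \<and>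
     (\<forall>X Y Z f g. f \<in> hom C X Y \<longrightarrow> g \<in> hom C Y Z \<longrightarrow>
        cshiftm C (ccomp C g f) = ccomp C (cshiftm C g) (cshiftm C f)) \<and>
     (\<forall>X Y f g. f \<in> hom C X Y \<longrightarrow> g \<in> hom C X Y \<longrightarrow>
        cshiftm C (cadd C f g) = cadd C (cshiftm C f) (cshiftm C g)) \<and>
     (\<forall>X Y f a. f \<in> hom C X Y \<longrightarrow> cshiftm C (csmult C a f) = csmult C a (cshiftm C f))"

definition triangle :: "('o, 'm, 'k) kcat \<Rightarrow> ('o \<times> 'o \<times> 'o \<times> 'm \<times> 'm \<times> 'm) \<Rightarrow> bool" where
  "triangle C T = (case T of (X, Y, Z, u, v, w) \<Rightarrow>
     X \<in> cobj C \<and> Y \<in> cobj C \<and> Z \<in> cobj C \<and>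
     u \<in> hom C X Y \<and> v \<in> hom C Y Z \<and> w \<in> hom C Z (cshift C X))"

definition triangle_morphism ::
  "('o, 'm, 'k) kcat \<Rightarrow> ('o \<times> 'o \<times> 'o \<times> 'm \<times> 'm \<times> 'm) \<Rightarrow>
   ('o \<times> 'o \<times> 'o \<times> 'm \<times> 'm \<times> 'm) \<Rightarrow> 'm \<Rightarrow> 'm \<Rightarrow> 'm \<Rightarrow> bool" where
  "triangle_morphism C T T' f g h = (case T of (X, Y, Z, u, v, w) \<Rightarrow>
     case T' of (X', Y', Z', u', v', w') \<Rightarrow>
     triangle C T \<and> triangle C T' \<and>
     f \<in> hom C X X' \<and> g \<in> hom C Y Y' \<and> h \<in> hom C Z Z' \<and>
     ccomp C g u = ccomp C u' f \<and> ccomp C h v = ccomp C v' g \<and>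
     ccomp C (cshiftm C f) w = ccomp C w' h)"

definition triangulated :: "('o, 'm, 'k::field) kcat \<Rightarrow> bool" where
  "triangulated C \<longleftrightarrow> kadditive C \<and> shift_automorphism C \<and>
     \<comment> \<open>TR0: distinguished triangles are triangles, closed under isomorphism\<close>
     (\<forall>T\<in>cdist C. triangle C T) \<and>
     (\<forall>T T' f g h. T \<in> cdist C \<longrightarrow> triangle_morphism C T T' f g h \<longrightarrow>
        iso C f \<longrightarrow> iso C g \<longrightarrow> iso C h \<longrightarrow> T' \<in> cdist C) \<and>
     \<comment> \<open>TR1\<close>
     (\<forall>X\<in>cobj C. \<forall>Z. zero_object C Z \<longrightarrow>
        (X, X, Z, cid C X, czero C X Z, czero C Z (cshift C X)) \<in> cdist C) \<and>
     (\<forall>X Y u. X \<in> cobj C \<longrightarrow> Y \<in> cobj C \<longrightarrow> u \<in> hom C X Y \<longrightarrow>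
        (\<exists>Z v w. (X, Y, Z, u, v, w) \<in> cdist C)) \<and>
     \<comment> \<open>TR2: rotation\<close>
     (\<forall>X Y Z u v w. triangle C (X, Y, Z, u, v, w) \<longrightarrow>
        ((X, Y, Z, u, v, w) \<in> cdist C \<longleftrightarrow>
         (Y, Z, cshift C X, v, w, cneg C (cshiftm C u)) \<in> cdist C)) \<and>
     \<comment> \<open>TR3: completion of morphisms\<close>
     (\<forall>X Y Z u v w X' Y' Z' u' v' w' f g.
        (X, Y, Z, u, v, w) \<in> cdist C \<longrightarrow> (X', Y', Z', u', v', w') \<in> cdist C \<longrightarrow>
        f \<in> hom C X X' \<longrightarrow> g \<in> hom C Y Y' \<longrightarrow> ccomp C g u = ccomp C u' f \<longrightarrow>
        (\<exists>h. triangle_morphism C (X, Y, Z, u, v, w) (X', Y', Z', u', v', w') f g h)) \<and>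
     \<comment> \<open>TR4: octahedral axiom\<close>
     (\<forall>X Y Z u v Z' j k X' l i Y' m n.
        (X, Y, Z', u, j, k) \<in> cdist C \<longrightarrow> (Y, Z, X', v, l, i) \<in> cdist C \<longrightarrow>
        (X, Z, Y', ccomp C v u, m, n) \<in> cdist C \<longrightarrow>
        (\<exists>f g. (Z', Y', X', f, g, ccomp C (cshiftm C j) i) \<in> cdist C \<and>
           ccomp C f j = ccomp C m v \<and> ccomp C n f = k \<and>
           ccomp C g m = l \<and> ccomp C (cshiftm C u) n = ccomp C i g))"

record ('o1, 'm1, 'o2, 'm2) ftor =
  fo :: "'o1 \<Rightarrow> 'o2"
  fm :: "'m1 \<Rightarrow> 'm2"

definition id_ftor :: "('o, 'm, 'o, 'm) ftor" where
  "id_ftor = \<lparr>fo = (\<lambda>X. X), fm = (\<lambda>f. f)\<rparr>"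

definition comp_ftor :: "('o2, 'm2, 'o3, 'm3) ftor \<Rightarrow> ('o1, 'm1, 'o2, 'm2) ftor \<Rightarrow>
    ('o1, 'm1, 'o3, 'm3) ftor" where
  "comp_ftor G F = \<lparr>fo = (\<lambda>X. fo G (fo F X)), fm = (\<lambda>f. fm G (fm F f))\<rparr>"

definition is_functor :: "('o1, 'm1, 'k) kcat \<Rightarrow> ('o2, 'm2, 'k) kcat \<Rightarrow>
    ('o1, 'm1, 'o2, 'm2) ftor \<Rightarrow> bool" where
  "is_functor C D F \<longleftrightarrow>
     (\<forall>X\<in>cobj C. fo F X \<in> cobj D) \<and>
     (\<forall>X Y f. f \<in> hom C X Y \<longrightarrow> fm F f \<in> hom D (fo F X) (fo F Y)) \<and>
     (\<forall>X\<in>cobj C. fm F (cid C X) = cid D (fo F X)) \<and>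
     (\<forall>X Y Z f g. f \<in> hom C X Y \<longrightarrow> g \<in> hom C Y Z \<longrightarrow>
        fm F (ccomp C g f) = ccomp D (fm F g) (fm F f))"

definition klinear_functor :: "('o1, 'm1, 'k::field) kcat \<Rightarrow> ('o2, 'm2, 'k) kcat \<Rightarrow>
    ('o1, 'm1, 'o2, 'm2) ftor \<Rightarrow> bool" where
  "klinear_functor C D F \<longleftrightarrow> is_functor C D F \<and>
     (\<forall>X Y f g. f \<in> hom C X Y \<longrightarrow> g \<in> hom C X Y \<longrightarrow>
        fm F (cadd C f g) = cadd D (fm F f) (fm F g)) \<and>
     (\<forall>X Y f a. f \<in> hom C X Y \<longrightarrow> fm F (csmult C a f) = csmult D a (fm F f))"

definition exact_functor :: "('o1, 'm1, 'k::field) kcat \<Rightarrow> ('o2, 'm2, 'k) kcat \<Rightarrow>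
    ('o1, 'm1, 'o2, 'm2) ftor \<Rightarrow> bool" where
  "exact_functor C D F \<longleftrightarrow> klinear_functor C D F \<and>
     (\<exists>xi. (\<forall>X\<in>cobj C. xi X \<in> hom D (fo F (cshift C X)) (cshift D (fo F X)) \<and> iso D (xi X)) \<and>
        (\<forall>X Y f. f \<in> hom C X Y \<longrightarrow>
           ccomp D (xi Y) (fm F (cshiftm C f)) = ccomp D (cshiftm D (fm F f)) (xi X)) \<and>
        (\<forall>X Y Z u v w. (X, Y, Z, u, v, w) \<in> cdist C \<longrightarrow>
           (fo F X, fo F Y, fo F Z, fm F u, fm F v, ccomp D (xi X) (fm F w)) \<in> cdist D))"

definition nat_trans :: "('o1, 'm1, 'k) kcat \<Rightarrow> ('o2, 'm2, 'k) kcat \<Rightarrow>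
    ('o1, 'm1, 'o2, 'm2) ftor \<Rightarrow> ('o1, 'm1, 'o2, 'm2) ftor \<Rightarrow> ('o1 \<Rightarrow> 'm2) \<Rightarrow> bool" where
  "nat_trans C D F G \<eta> \<longleftrightarrow>
     is_functor C D F \<and> is_functor C D G \<and>
     (\<forall>X\<in>cobj C. \<eta> X \<in> hom D (fo F X) (fo G X)) \<and>
     (\<forall>X Y f. f \<in> hom C X Y \<longrightarrow> ccomp D (\<eta> Y) (fm F f) = ccomp D (fm G f) (\<eta> X))"

definition nat_iso :: "('o1, 'm1, 'k) kcat \<Rightarrow> ('o2, 'm2, 'k) kcat \<Rightarrow>
    ('o1, 'm1, 'o2, 'm2) ftor \<Rightarrow> ('o1, 'm1, 'o2, 'm2) ftor \<Rightarrow> ('o1 \<Rightarrow> 'm2) \<Rightarrow> bool" where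
  "nat_iso C D F G \<eta> \<longleftrightarrow> nat_trans C D F G \<eta> \<and> (\<forall>X\<in>cobj C. iso D (\<eta> X))"

definition adjunction :: "('o1, 'm1, 'k) kcat \<Rightarrow> ('o2, 'm2, 'k) kcat \<Rightarrow>
    ('o1, 'm1, 'o2, 'm2) ftor \<Rightarrow> ('o2, 'm2, 'o1, 'm1) ftor \<Rightarrow>
    ('o1 \<Rightarrow> 'm1) \<Rightarrow> ('o2 \<Rightarrow> 'm2) \<Rightarrow> bool" where
  "adjunction C D Lf Rf \<eta> \<epsilon> \<longleftrightarrow>
     is_functor C D Lf \<and> is_functor D C Rf \<and>
     nat_trans C C id_ftor (comp_ftor Rf Lf) \<eta> \<and>
     nat_trans D D (comp_ftor Lf Rf) id_ftor \<epsilon> \<and>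
     (\<forall>X\<in>cobj C. ccomp D (\<epsilon> (fo Lf X)) (fm Lf (\<eta> X)) = cid D (fo Lf X)) \<and>
     (\<forall>Y\<in>cobj D. ccomp C (fm Rf (\<epsilon> Y)) (\<eta> (fo Rf Y)) = cid C (fo Rf Y))"

definition fully_faithful :: "('o1, 'm1, 'k) kcat \<Rightarrow> ('o2, 'm2, 'k) kcat \<Rightarrow>
    ('o1, 'm1, 'o2, 'm2) ftor \<Rightarrow> bool" where
  "fully_faithful C D F \<longleftrightarrow> is_functor C D F \<and>
     (\<forall>X\<in>cobj C. \<forall>Y\<in>cobj C. bij_betw (fm F) (hom C X Y) (hom D (fo F X) (fo F Y)))"

definition exceptional where
  "exceptional A B F L etaL epsL R etaR epsR \<longleftrightarrow>
     fully_faithful A B F \<and> adjunction B A L F etaL epsL \<and> adjunction A B F R etaR epsR"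

definition exceptionally_frobenius where
  "exceptionally_frobenius A B F L etaL epsL R etaR epsR \<longleftrightarrow>
     exceptional A B F L etaL epsL R etaR epsR \<and> (\<exists>\<theta>. nat_iso B A R L \<theta>)"

definition canon_phi where
  "canon_phi A F L R etaL etaR Y =
     ccomp A (inv_arr A (etaR (fo L Y))) (fm R (etaL Y))"

end

theory Submission
  imports Defs
begin

text \<open>Only the underlying categories and adjunctions matter. Since \<open>F\<close> is fully faithful, the unit \<open>\<eta>\<^sub>R\<close> of \<open>F \<stileturn> R\<close> and the counit
\<open>\<epsilon>\<^sub>L\<close> of \<open>L \<stileturn> F\<close> are isomorphisms. The triangle identity
\<open>\<epsilon>\<^sub>L L \<circ> L \<eta>\<^sub>L = id\<close> then makes \<open>L \<eta>\<^sub>L\<close> invertible, and any natural isomorphism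
\<open>R \<cong> L\<close> transports this to \<open>R \<eta>\<^sub>L\<close>. Hence \<open>\<phi> = (\<eta>\<^sub>R L)\<^sup>-\<^sup>1 \<circ> R \<eta>\<^sub>L\<close> is a
composite of isomorphisms.\<close>

lemma category_hom_objs:
  "category C \<Longrightarrow> f \<in> hom C X Y \<Longrightarrow> X \<in> cobj C \<and> Y \<in> cobj C"
  unfolding category_def hom_def by blast

lemma category_id_hom: "category C \<Longrightarrow> X \<in> cobj C \<Longrightarrow> cid C X \<in> hom C X X"
  unfolding category_def by blast

lemma category_comp_hom:
  "category C \<Longrightarrow> f \<in> hom C X Y \<Longrightarrow> g \<in> hom C Y Z \<Longrightarrow> ccomp C g f \<in> hom C X Z"
  unfolding category_def by blast

lemma category_comp_assoc:
  "category C \<Longrightarrow> f \<in> hom C W X \<Longrightarrow> g \<in> hom C X Y \<Longrightarrow> h \<in> hom C Y Z \<Longrightarrow>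
   ccomp C h (ccomp C g f) = ccomp C (ccomp C h g) f"
  unfolding category_def by blast

lemma category_id_left: "category C \<Longrightarrow> f \<in> hom C X Y \<Longrightarrow> ccomp C (cid C Y) f = f"
  unfolding category_def by blast

lemma category_id_right: "category C \<Longrightarrow> f \<in> hom C X Y \<Longrightarrow> ccomp C f (cid C X) = f"
  unfolding category_def by blast

lemma triangulated_category: "triangulated C \<Longrightarrow> category C"
  unfolding triangulated_def kadditive_def klinear_def by blast

lemma isoI:
  assumes "f \<in> hom C X Y" "g \<in> hom C Y X"
    and "ccomp C g f = cid C X" "ccomp C f g = cid C Y"
  shows "iso C f"
proof -
  have "f \<in> carr C" "cdom C f = X" "ccod C f = Y" using assms(1) by (auto simp: hom_def)
  then show ?thesis unfolding iso_def using assms(2-4) by blast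
qed

lemma inv_arr:
  assumes C: "category C" and "iso C f" and f: "f \<in> hom C X Y"
  shows inv_arr_hom: "inv_arr C f \<in> hom C Y X"
    and inv_arr_comp_left: "ccomp C (inv_arr C f) f = cid C X"
    and inv_arr_comp_right: "ccomp C f (inv_arr C f) = cid C Y"
proof -
  have dom_cod: "cdom C f = X" "ccod C f = Y" using f by (auto simp: hom_def)
  obtain g where g: "g \<in> hom C Y X" "ccomp C g f = cid C X" "ccomp C f g = cid C Y"
    using \<open>iso C f\<close> unfolding iso_def dom_cod by blast
  have "g' = g" if g': "g' \<in> hom C Y X" "ccomp C g' f = cid C X" for g'
  proof -
    have "g' = ccomp C g' (ccomp C f g)" using category_id_right[OF C g'(1)] g(3) by simp
    also have "\<dots> = ccomp C (ccomp C g' f) g" using category_comp_assoc[OF C g(1) f g'(1)] .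
    finally show ?thesis using g'(2) category_id_left[OF C g(1)] by simp
  qed
  then have "inv_arr C f = g"
    unfolding inv_arr_def dom_cod using g by (intro the_equality) blast+
  with g show "inv_arr C f \<in> hom C Y X" "ccomp C (inv_arr C f) f = cid C X"
    "ccomp C f (inv_arr C f) = cid C Y" by simp_all
qed

lemma iso_inv_arr: "category C \<Longrightarrow> iso C f \<Longrightarrow> f \<in> hom C X Y \<Longrightarrow> iso C (inv_arr C f)"
  by (rule isoI[OF inv_arr_hom _ inv_arr_comp_right inv_arr_comp_left])

lemma iso_comp:
  assumes C: "category C" and "iso C f" "iso C g" and f: "f \<in> hom C X Y" and g: "g \<in> hom C Y Z"
  shows "iso C (ccomp C g f)"
proof -
  let ?f' = "inv_arr C f" and ?g' = "inv_arr C g"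
  have f': "?f' \<in> hom C Y X" "ccomp C ?f' f = cid C X" "ccomp C f ?f' = cid C Y"
    using inv_arr[OF C \<open>iso C f\<close> f] by blast+
  have g': "?g' \<in> hom C Z Y" "ccomp C ?g' g = cid C Y" "ccomp C g ?g' = cid C Z"
    using inv_arr[OF C \<open>iso C g\<close> g] by blast+
  have gf: "ccomp C g f \<in> hom C X Z" using category_comp_hom[OF C f g] .
  have f'g': "ccomp C ?f' ?g' \<in> hom C Z X" using category_comp_hom[OF C g'(1) f'(1)] .
  have "ccomp C (ccomp C ?f' ?g') (ccomp C g f) = ccomp C ?f' (ccomp C (ccomp C ?g' g) f)"
    using category_comp_assoc[OF C gf g'(1) f'(1)] category_comp_assoc[OF C f g g'(1)] by simp
  then have left: "ccomp C (ccomp C ?f' ?g') (ccomp C g f) = cid C X"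
    using f'(2) g'(2) category_id_left[OF C f] by simp
  have "ccomp C (ccomp C g f) (ccomp C ?f' ?g') = ccomp C g (ccomp C (ccomp C f ?f') ?g')"
    using category_comp_assoc[OF C f'g' f g] category_comp_assoc[OF C g'(1) f'(1) f] by simp
  then have right: "ccomp C (ccomp C g f) (ccomp C ?f' ?g') = cid C Z"
    using f'(3) g'(3) category_id_left[OF C g'(1)] by simp
  show ?thesis by (rule isoI[OF gf f'g' left right])
qed

lemma iso_cancel_left:
  assumes C: "category C" and g: "g \<in> hom C Y Z" "iso C g" and f: "f \<in> hom C X Y"
    and "iso C (ccomp C g f)"
  shows "iso C f"
proof -
  let ?g' = "inv_arr C g"
  have "f = ccomp C ?g' (ccomp C g f)"
    using category_comp_assoc[OF C f g(1) inv_arr_hom[OF C g(2,1)]]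
      inv_arr_comp_left[OF C g(2,1)] category_id_left[OF C f] by simp
  also have "iso C \<dots>"
    using iso_comp[OF C \<open>iso C (ccomp C g f)\<close> iso_inv_arr[OF C g(2,1)]
        category_comp_hom[OF C f g(1)] inv_arr_hom[OF C g(2,1)]] .
  finally show ?thesis .
qed

lemma iso_of_iso_left_inverse:
  assumes C: "category C" and e: "e \<in> hom C Y X" "iso C e" and h: "h \<in> hom C X Y"
    and "ccomp C e h = cid C X"
  shows "iso C h"
proof (rule iso_cancel_left[OF C e h])
  have id: "cid C X \<in> hom C X X" using category_hom_objs[OF C h] category_id_hom[OF C] by blast
  have "ccomp C (cid C X) (cid C X) = cid C X" using category_id_left[OF C id] .
  then show "iso C (ccomp C e h)"
    unfolding \<open>ccomp C e h = cid C X\<close> by (intro isoI[OF id id])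
qed

lemma functor_obj: "is_functor C D F \<Longrightarrow> X \<in> cobj C \<Longrightarrow> fo F X \<in> cobj D"
  unfolding is_functor_def by blast

lemma functor_hom: "is_functor C D F \<Longrightarrow> f \<in> hom C X Y \<Longrightarrow> fm F f \<in> hom D (fo F X) (fo F Y)"
  unfolding is_functor_def by blast

lemma functor_id: "is_functor C D F \<Longrightarrow> X \<in> cobj C \<Longrightarrow> fm F (cid C X) = cid D (fo F X)"
  unfolding is_functor_def by blast

lemma functor_comp:
  "is_functor C D F \<Longrightarrow> f \<in> hom C X Y \<Longrightarrow> g \<in> hom C Y Z \<Longrightarrow>
   fm F (ccomp C g f) = ccomp D (fm F g) (fm F f)"
  unfolding is_functor_def by blast

lemma fully_faithful_full:
  assumes "fully_faithful C D F" "X \<in> cobj C" "Y \<in> cobj C" "h \<in> hom D (fo F X) (fo F Y)"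
  obtains g where "g \<in> hom C X Y" "fm F g = h"
  using assms unfolding fully_faithful_def bij_betw_def by (metis imageE)

lemma fully_faithful_faithful:
  assumes "category C" "fully_faithful C D F"
    and "f \<in> hom C X Y" "g \<in> hom C X Y" "fm F f = fm F g"
  shows "f = g"
  using assms category_hom_objs[of C f X Y]
  unfolding fully_faithful_def bij_betw_def inj_on_def by blast

lemma nat_trans_hom:
  "nat_trans C D F G \<eta> \<Longrightarrow> X \<in> cobj C \<Longrightarrow> \<eta> X \<in> hom D (fo F X) (fo G X)"
  unfolding nat_trans_def by blast

lemma nat_trans_natural:
  "nat_trans C D F G \<eta> \<Longrightarrow> f \<in> hom C X Y \<Longrightarrow>
   ccomp D (\<eta> Y) (fm F f) = ccomp D (fm G f) (\<eta> X)"
  unfolding nat_trans_def by blast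

lemma nat_iso_transfer_iso:
  assumes D: "category D" and C: "category C" and \<theta>: "nat_iso C D G H \<theta>"
    and f: "f \<in> hom C X Y" and "iso D (fm H f)"
  shows "iso D (fm G f)"
proof -
  have nt: "nat_trans C D G H \<theta>" and G: "is_functor C D G" and H: "is_functor C D H"
    using \<theta> unfolding nat_iso_def nat_trans_def by blast+
  have X: "X \<in> cobj C" and Y: "Y \<in> cobj C" using category_hom_objs[OF C f] by blast+
  have "iso D (ccomp D (fm H f) (\<theta> X))"
    using iso_comp[OF D _ \<open>iso D (fm H f)\<close> nat_trans_hom[OF nt X] functor_hom[OF H f]]
      \<theta> X unfolding nat_iso_def by blast
  then have "iso D (ccomp D (\<theta> Y) (fm G f))" using nat_trans_natural[OF nt f] by simp
  then show ?thesis
    using iso_cancel_left[OF D nat_trans_hom[OF nt Y] _ functor_hom[OF G f]] \<theta> Y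
    unfolding nat_iso_def by blast
qed

lemma adjunction_unit_hom:
  "adjunction C D Lf Rf \<eta> \<epsilon> \<Longrightarrow> X \<in> cobj C \<Longrightarrow> \<eta> X \<in> hom C X (fo Rf (fo Lf X))"
  unfolding adjunction_def nat_trans_def by (simp add: id_ftor_def comp_ftor_def)

lemma adjunction_counit_hom:
  "adjunction C D Lf Rf \<eta> \<epsilon> \<Longrightarrow> Y \<in> cobj D \<Longrightarrow> \<epsilon> Y \<in> hom D (fo Lf (fo Rf Y)) Y"
  unfolding adjunction_def nat_trans_def by (simp add: id_ftor_def comp_ftor_def)

lemma adjunction_unit_natural:
  "adjunction C D Lf Rf \<eta> \<epsilon> \<Longrightarrow> f \<in> hom C X Y \<Longrightarrow>
   ccomp C (\<eta> Y) f = ccomp C (fm Rf (fm Lf f)) (\<eta> X)"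
  unfolding adjunction_def nat_trans_def by (simp add: id_ftor_def comp_ftor_def)

lemma adjunction_counit_natural:
  "adjunction C D Lf Rf \<eta> \<epsilon> \<Longrightarrow> f \<in> hom D X Y \<Longrightarrow>
   ccomp D (\<epsilon> Y) (fm Lf (fm Rf f)) = ccomp D f (\<epsilon> X)"
  unfolding adjunction_def nat_trans_def by (simp add: id_ftor_def comp_ftor_def)

lemma adjunction_left_triangle:
  "adjunction C D Lf Rf \<eta> \<epsilon> \<Longrightarrow> X \<in> cobj C \<Longrightarrow>
   ccomp D (\<epsilon> (fo Lf X)) (fm Lf (\<eta> X)) = cid D (fo Lf X)"
  unfolding adjunction_def by blast

lemma adjunction_right_triangle:
  "adjunction C D Lf Rf \<eta> \<epsilon> \<Longrightarrow> Y \<in> cobj D \<Longrightarrow>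
   ccomp C (fm Rf (\<epsilon> Y)) (\<eta> (fo Rf Y)) = cid C (fo Rf Y)"
  unfolding adjunction_def by blast

lemma adjunction_functors:
  "adjunction C D Lf Rf \<eta> \<epsilon> \<Longrightarrow> is_functor C D Lf \<and> is_functor D C Rf"
  unfolding adjunction_def by blast

text \<open>The inverse of the unit at \<open>X\<close> is the preimage of \<open>\<epsilon> (Lf X)\<close> under \<open>Lf\<close>.\<close>

lemma adjunction_unit_iso_if_fully_faithful:
  assumes C: "category C" and ff: "fully_faithful C D Lf"
    and adj: "adjunction C D Lf Rf \<eta> \<epsilon>" and X: "X \<in> cobj C"
  shows "iso C (\<eta> X)"
proof -
  have Lf: "is_functor C D Lf" and Rf: "is_functor D C Rf"
    using adjunction_functors[OF adj] by blast+
  have LX: "fo Lf X \<in> cobj D" using functor_obj[OF Lf X] .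
  have RLX: "fo Rf (fo Lf X) \<in> cobj C" using functor_obj[OF Rf LX] .
  have \<eta>X: "\<eta> X \<in> hom C X (fo Rf (fo Lf X))" using adjunction_unit_hom[OF adj X] .
  obtain g where g: "g \<in> hom C (fo Rf (fo Lf X)) X" "fm Lf g = \<epsilon> (fo Lf X)"
    using fully_faithful_full[OF ff RLX X adjunction_counit_hom[OF adj LX]] .
  have "fm Lf (ccomp C g (\<eta> X)) = fm Lf (cid C X)"
    using functor_comp[OF Lf \<eta>X g(1)] g(2) adjunction_left_triangle[OF adj X]
      functor_id[OF Lf X] by simp
  then have left: "ccomp C g (\<eta> X) = cid C X"
    using fully_faithful_faithful[OF C ff category_comp_hom[OF C \<eta>X g(1)]
        category_id_hom[OF C X]] by blast
  have "ccomp C (\<eta> X) g = ccomp C (fm Rf (\<epsilon> (fo Lf X))) (\<eta> (fo Rf (fo Lf X)))"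
    using adjunction_unit_natural[OF adj g(1)] g(2) by simp
  then have right: "ccomp C (\<eta> X) g = cid C (fo Rf (fo Lf X))"
    using adjunction_right_triangle[OF adj LX] by simp
  show ?thesis by (rule isoI[OF \<eta>X g(1) left right])
qed

text \<open>Dually, the inverse of the counit at \<open>Y\<close> is the preimage of \<open>\<eta> (Rf Y)\<close> under \<open>Rf\<close>.\<close>

lemma adjunction_counit_iso_if_fully_faithful:
  assumes D: "category D" and ff: "fully_faithful D C Rf"
    and adj: "adjunction C D Lf Rf \<eta> \<epsilon>" and Y: "Y \<in> cobj D"
  shows "iso D (\<epsilon> Y)"
proof -
  have Lf: "is_functor C D Lf" and Rf: "is_functor D C Rf"
    using adjunction_functors[OF adj] by blast+
  have RY: "fo Rf Y \<in> cobj C" using functor_obj[OF Rf Y] .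
  have LRY: "fo Lf (fo Rf Y) \<in> cobj D" using functor_obj[OF Lf RY] .
  have \<epsilon>Y: "\<epsilon> Y \<in> hom D (fo Lf (fo Rf Y)) Y" using adjunction_counit_hom[OF adj Y] .
  obtain g where g: "g \<in> hom D Y (fo Lf (fo Rf Y))" "fm Rf g = \<eta> (fo Rf Y)"
    using fully_faithful_full[OF ff Y LRY adjunction_unit_hom[OF adj RY]] .
  have "fm Rf (ccomp D (\<epsilon> Y) g) = fm Rf (cid D Y)"
    using functor_comp[OF Rf g(1) \<epsilon>Y] g(2) adjunction_right_triangle[OF adj Y]
      functor_id[OF Rf Y] by simp
  then have right: "ccomp D (\<epsilon> Y) g = cid D Y"
    using fully_faithful_faithful[OF D ff category_comp_hom[OF D g(1) \<epsilon>Y]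
        category_id_hom[OF D Y]] by blast
  have "ccomp D g (\<epsilon> Y) = ccomp D (\<epsilon> (fo Lf (fo Rf Y))) (fm Lf (\<eta> (fo Rf Y)))"
    using adjunction_counit_natural[OF adj g(1)] g(2) by simp
  then have left: "ccomp D g (\<epsilon> Y) = cid D (fo Lf (fo Rf Y))"
    using adjunction_left_triangle[OF adj RY] by simp
  show ?thesis by (rule isoI[OF \<epsilon>Y g(1) left right])
qed

lemma left_adjoint_of_fully_faithful_maps_unit_to_iso:
  assumes A: "category A" and ff: "fully_faithful A B F"
    and adj: "adjunction B A L F etaL epsL" and Y: "Y \<in> cobj B"
  shows "iso A (fm L (etaL Y))"
proof -
  have L: "is_functor B A L" using adjunction_functors[OF adj] by blast
  have LY: "fo L Y \<in> cobj A" using functor_obj[OF L Y] .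
  show ?thesis
    using iso_of_iso_left_inverse[OF A adjunction_counit_hom[OF adj LY]
        adjunction_counit_iso_if_fully_faithful[OF A ff adj LY]
        functor_hom[OF L adjunction_unit_hom[OF adj Y]]]
      adjunction_left_triangle[OF adj Y] by simp
qed

theorem proposition3p7:
  fixes A :: "('a, 'am, 'k::field) kcat" and B :: "('b, 'bm, 'k) kcat"
    and F :: "('a, 'am, 'b, 'bm) ftor" and L R :: "('b, 'bm, 'a, 'am) ftor"
    and etaL :: "'b \<Rightarrow> 'bm" and epsL :: "'a \<Rightarrow> 'am"
    and etaR :: "'a \<Rightarrow> 'am" and epsR :: "'b \<Rightarrow> 'bm"
  assumes "triangulated A" and "triangulated B"
    and "exact_functor A B F" and "exact_functor B A L" and "exact_functor B A R"
    and "exceptionally_frobenius A B F L etaL epsL R etaR epsR"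
  shows "\<forall>Y\<in>cobj B. canon_phi A F L R etaL etaR Y \<in> hom A (fo R Y) (fo L Y)
           \<and> iso A (canon_phi A F L R etaL etaR Y)"
proof
  fix Y assume Y: "Y \<in> cobj B"
  have A: "category A" and B: "category B" using assms(1,2) triangulated_category by auto
  have ff: "fully_faithful A B F" and adjL: "adjunction B A L F etaL epsL"
    and adjR: "adjunction A B F R etaR epsR"
    using assms(6) unfolding exceptionally_frobenius_def exceptional_def by auto
  obtain \<theta> where \<theta>: "nat_iso B A R L \<theta>"
    using assms(6) unfolding exceptionally_frobenius_def by blast
  have LY: "fo L Y \<in> cobj A" using functor_obj[OF conjunct1[OF adjunction_functors[OF adjL]] Y] .
  have etaLY: "etaL Y \<in> hom B Y (fo F (fo L Y))" using adjunction_unit_hom[OF adjL Y] .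
  have R_etaL: "fm R (etaL Y) \<in> hom A (fo R Y) (fo R (fo F (fo L Y)))" "iso A (fm R (etaL Y))"
    using functor_hom[OF conjunct2[OF adjunction_functors[OF adjR]] etaLY]
      nat_iso_transfer_iso[OF A B \<theta> etaLY
        left_adjoint_of_fully_faithful_maps_unit_to_iso[OF A ff adjL Y]] by blast+
  have etaR_LY: "etaR (fo L Y) \<in> hom A (fo L Y) (fo R (fo F (fo L Y)))" "iso A (etaR (fo L Y))"
    using adjunction_unit_hom[OF adjR LY]
      adjunction_unit_iso_if_fully_faithful[OF A ff adjR LY] by blast+
  show "canon_phi A F L R etaL etaR Y \<in> hom A (fo R Y) (fo L Y)
           \<and> iso A (canon_phi A F L R etaL etaR Y)"
    unfolding canon_phi_def
    using category_comp_hom[OF A R_etaL(1) inv_arr_hom[OF A etaR_LY(2,1)]]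
      iso_comp[OF A R_etaL(2) iso_inv_arr[OF A etaR_LY(2,1)] R_etaL(1)
        inv_arr_hom[OF A etaR_LY(2,1)]] by blast
qed

end
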